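(* For each integer $k\ge1$, the function $F_k:(\tfrac12,\tfrac34)\to\mathbb{R}_+$, $F_k(h)=\rho_h(k)$, is increasing. Consequently $\lim_{h\to\frac12+}\sum_{k=1}^\infty\rho_h^2(k)=0$.
   Context: $\rho_h(k)=\frac12\big((k+1)^{2h}+(k-1)^{2h}-2k^{2h}\big)$. *)

theory Defs
  imports "HOL-Analysis.Analysis"
begin

definition rho :: "real \<Rightarrow> nat \<Rightarrow> real" where
  "rho h k = ((real k + 1) powr (2*h) + (real k - 1) powr (2*h) - 2 * (real k) powr (2*h)) / 2"

end

theory Submission
  imports Defs
begin

text \<open>
  With t = 1/k one has 2 rho_h(k) = k^(2h) ((1+t)^(2h) + (1-t)^(2h) - 2). Both factors increase
  with h once 2h \<ge> 1: the derivative of a \<mapsto> (1+t)^a + (1-t)^a is at least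
  (1+t) ln(1+t) + (1-t) ln(1-t) > 0 there, and at a = 1 the bracket vanishes. The mean value theorem bounds the second difference 2 rho_h(k)
  by 4 (k-1)^(2h-2), so the series of squares converges for h < 3/4; by monotonicity its terms
  for h \<le> 5/8 are dominated by those at 5/8, and Tannery's theorem lets the termwise limit
  rho_(1/2)(k) = 0 pass through the sum.
\<close>

lemma xlnx_symmetric_pos:
  fixes t :: real
  assumes "0 < t" "t < 1"
  shows "(1 + t) * ln (1 + t) + (1 - t) * ln (1 - t) > 0"
proof -
  have "ln (1 / (1 + t)) \<le> 1 / (1 + t) - 1"
    using assms by (intro ln_le_minus_one) auto
  moreover have "ln (1 / (1 + t)) \<noteq> 1 / (1 + t) - 1"
    using assms ln_eq_minus_one[of "1 / (1 + t)"] by auto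
  ultimately have "ln (1 / (1 + t)) < 1 / (1 + t) - 1"
    by linarith
  then have plus: "(1 + t) * ln (1 + t) > t"
    using assms by (simp add: ln_div field_simps)
  have "ln (1 / (1 - t)) \<le> 1 / (1 - t) - 1"
    using assms by (intro ln_le_minus_one) auto
  then have minus: "(1 - t) * ln (1 - t) \<ge> - t"
    using assms by (simp add: ln_div field_simps)
  from plus minus show ?thesis
    by linarith
qed

lemma symmetric_powr_sum_strict_mono:
  fixes t a b :: real
  assumes "0 < t" "t < 1" "1 \<le> b" "b < a"
  shows "(1 + t) powr b + (1 - t) powr b < (1 + t) powr a + (1 - t) powr a"
proof (rule DERIV_pos_imp_increasing[OF \<open>b < a\<close>])
  fix x
  assume "b \<le> x"
  have "(1 + t) powr x * ln (1 + t) \<ge> (1 + t) * ln (1 + t)"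
    using assms \<open>b \<le> x\<close> powr_mono[of 1 x "1 + t"] by (intro mult_right_mono) auto
  moreover have "(1 - t) powr x \<le> (1 - t) powr 1"
    using assms \<open>b \<le> x\<close> by (intro powr_mono') auto
  then have "(1 - t) powr x * ln (1 - t) \<ge> (1 - t) * ln (1 - t)"
    using assms ln_less_zero[of "1 - t"] by (simp add: mult_right_mono_neg)
  ultimately have "(1 + t) powr x * ln (1 + t) + (1 - t) powr x * ln (1 - t) > 0"
    using xlnx_symmetric_pos[OF assms(1,2)] by linarith
  moreover have "((\<lambda>a. (1 + t) powr a + (1 - t) powr a) has_real_derivative
      (1 + t) powr x * ln (1 + t) + (1 - t) powr x * ln (1 - t)) (at x)"
    using assms by (auto intro!: derivative_eq_intros simp: powr_def)
  ultimately show "\<exists>y. ((\<lambda>a. (1 + t) powr a + (1 - t) powr a) has_real_derivative y) (at x) \<and> y > 0"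
    by blast
qed

lemma powr_diff_mean_value:
  fixes x y p :: real
  assumes "0 < y" "y < x"
  shows "\<exists>z. y < z \<and> z < x \<and> x powr p - y powr p = (x - y) * (p * z powr (p - 1))"
proof -
  have "\<exists>z. y < z \<and> z < x \<and> (\<lambda>x. x powr p) x - (\<lambda>x. x powr p) y = (x - y) * (p * z powr (p - 1))"
    using assms by (intro MVT2) (auto intro!: has_real_derivative_powr)
  then show ?thesis
    by simp
qed

lemma powr_second_difference_le:
  fixes x a :: real
  assumes "1 < x" "1 \<le> a" "a \<le> 2"
  shows "(x + 1) powr a + (x - 1) powr a - 2 * x powr a \<le> 4 * (x - 1) powr (a - 2)"
proof -
  obtain z1 where z1: "x < z1" "z1 < x + 1" "(x + 1) powr a - x powr a = a * z1 powr (a - 1)"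
    using powr_diff_mean_value[of x "x + 1" a] assms by auto
  obtain z2 where z2: "z2 < x" "x - 1 < z2" "x powr a - (x - 1) powr a = a * z2 powr (a - 1)"
    using powr_diff_mean_value[of "x - 1" x a] assms by auto
  obtain z3 where z3: "x - 1 < z3"
      "(x + 1) powr (a - 1) - (x - 1) powr (a - 1) = 2 * ((a - 1) * z3 powr (a - 2))"
    using powr_diff_mean_value[of "x - 1" "x + 1" "a - 1"] assms by (auto simp: algebra_simps)
  have "z1 powr (a - 1) \<le> (x + 1) powr (a - 1)" "(x - 1) powr (a - 1) \<le> z2 powr (a - 1)"
    using z1 z2 assms by (intro powr_mono2; auto)+
  then have "a * z1 powr (a - 1) \<le> a * (x + 1) powr (a - 1)"
    "a * (x - 1) powr (a - 1) \<le> a * z2 powr (a - 1)"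
    using assms by (simp_all add: mult_left_mono)
  then have "(x + 1) powr a + (x - 1) powr a - 2 * x powr a
      \<le> a * ((x + 1) powr (a - 1) - (x - 1) powr (a - 1))"
    using z1 z2 by (simp add: algebra_simps)
  also have "\<dots> = 2 * (a * (a - 1)) * z3 powr (a - 2)"
    using z3 by simp
  also have "\<dots> \<le> 2 * 2 * (x - 1) powr (a - 2)"
  proof -
    have "a * (a - 1) \<le> 2 * 1"
      using assms by (intro mult_mono) auto
    then show ?thesis
      using z3 assms powr_mono2'[of "a - 2" "x - 1" z3] by (intro mult_mono mult_left_mono) auto
  qed
  finally show ?thesis
    by simp
qed

lemma rho_half: "k \<ge> 1 \<Longrightarrow> rho (1/2) k = 0"
  by (simp add: rho_def)

lemma rho_eq_scaled:
  assumes "real k > 1"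
  shows "rho h k =
    real k powr (2 * h) * ((1 + 1 / real k) powr (2 * h) + (1 - 1 / real k) powr (2 * h) - 2) / 2"
proof -
  have "real k + 1 = real k * (1 + 1 / real k)" "real k - 1 = real k * (1 - 1 / real k)"
    using assms by (auto simp: field_simps)
  then have "(real k + 1) powr (2 * h) = real k powr (2 * h) * (1 + 1 / real k) powr (2 * h)"
    "(real k - 1) powr (2 * h) = real k powr (2 * h) * (1 - 1 / real k) powr (2 * h)"
    using assms by (simp_all add: powr_mult del: of_nat_add)
  then show ?thesis
    unfolding rho_def by (simp add: algebra_simps)
qed

lemma rho_pos_strict_mono:
  assumes "k \<ge> 1" "1/2 < h1" "h1 < h2"
  shows "0 < rho h1 k" "rho h1 k < rho h2 k"
proof -
  have "0 < rho h1 k \<and> rho h1 k < rho h2 k"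
  proof (cases "k = 1")
    case True
    have "2 powr 1 < (2::real) powr (2 * h1)" "(2::real) powr (2 * h1) < 2 powr (2 * h2)"
      using assms by (intro powr_less_mono; simp)+
    then show ?thesis
      using True by (simp add: rho_def)
  next
    case False
    then have k: "real k > 1"
      using assms by simp
    define t where "t = 1 / real k"
    have t: "0 < t" "t < 1"
      using k by (auto simp: t_def)
    define g where "g h = (1 + t) powr (2 * h) + (1 - t) powr (2 * h) - 2" for h
    have rho_eq: "rho h k = real k powr (2 * h) * g h / 2" for h
      using rho_eq_scaled[OF k] by (simp add: t_def g_def)
    have "g (1/2) = 0"
      using t by (simp add: g_def)
    moreover have "g (1/2) < g h1" "g h1 < g h2"
      using symmetric_powr_sum_strict_mono[OF t, of 1 "2 * h1"]
        symmetric_powr_sum_strict_mono[OF t, of "2 * h1" "2 * h2"] assms t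
      by (simp_all add: g_def)
    moreover have "real k powr (2 * h1) < real k powr (2 * h2)"
      using k assms by (intro powr_less_mono) auto
    ultimately have "0 < g h1" "real k powr (2 * h1) * g h1 < real k powr (2 * h2) * g h2"
      using k by (auto intro: mult_strict_mono)
    then show ?thesis
      using k by (simp add: rho_eq)
  qed
  then show "0 < rho h1 k" "rho h1 k < rho h2 k"
    by auto
qed

lemma rho_Suc_le:
  assumes "m \<ge> 1" "1/2 < h" "h \<le> 1"
  shows "rho h (Suc m) \<le> 2 * real m powr (2 * h - 2)"
  using powr_second_difference_le[of "real m + 1" "2 * h"] assms
  by (simp add: rho_def add.commute)

lemma summable_rho_Suc_squared:
  assumes "1/2 < h" "h < 3/4"
  shows "summable (\<lambda>k. (rho h (Suc k))\<^sup>2)"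
proof (rule summable_comparison_test_ev)
  show "summable (\<lambda>k. 4 * real k powr (4 * h - 4))"
    using assms by (intro summable_mult) (simp add: summable_real_powr_iff)
  show "\<forall>\<^sub>F k in sequentially. norm ((rho h (Suc k))\<^sup>2) \<le> 4 * real k powr (4 * h - 4)"
    using eventually_ge_at_top[of "1::nat"]
  proof eventually_elim
    case (elim k)
    have "0 \<le> rho h (Suc k)"
      using rho_pos_strict_mono(1)[of "Suc k" h "h + 1"] assms by simp
    then have "(rho h (Suc k))\<^sup>2 \<le> (2 * real k powr (2 * h - 2))\<^sup>2"
      using rho_Suc_le[of k h] elim assms by (intro power_mono) auto
    also have "\<dots> = 4 * real k powr (4 * h - 4)"
      by (simp add: power2_eq_square powr_add[symmetric])
    finally show ?case
      by simp
  qed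
qed

lemma rho_tendsto_half:
  assumes "k \<ge> 1"
  shows "((\<lambda>h. rho h k) \<longlongrightarrow> 0) (at_right (1/2))"
proof -
  have "isCont (\<lambda>h. rho h k) (1/2)"
    using assms unfolding rho_def
    by (cases "k = 1") (auto intro!: continuous_intros)
  then have "((\<lambda>h. rho h k) \<longlongrightarrow> rho (1/2) k) (at_right (1/2))"
    by (simp add: isCont_def filterlim_at_split)
  then show ?thesis
    using rho_half[OF assms] by simp
qed

lemma suminf_rho_Suc_squared_tendsto_0:
  "((\<lambda>h. \<Sum>k. (rho h (Suc k))\<^sup>2) \<longlongrightarrow> 0) (at_right (1/2))"
proof -
  define h0 :: real where "h0 = 5/8"
  have dominated: "(rho h (Suc k))\<^sup>2 \<le> (rho h0 (Suc k))\<^sup>2" if "1/2 < h" "h \<le> h0" for h k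
    using rho_pos_strict_mono[of "Suc k" h h0] rho_pos_strict_mono(1)[of "Suc k" h "h + 1"] that
    by (cases "h = h0") (auto intro: power_mono)
  have "eventually (\<lambda>h. 1/2 < h \<and> h \<le> h0) (at_right (1/2::real))"
    unfolding h0_def eventually_at_right_field by (intro exI[of _ "5/8"]) auto
  then have "\<forall>\<^sub>F (k, h) in sequentially \<times>\<^sub>F at_right (1/2).
      norm ((rho h (Suc k))\<^sup>2) \<le> (rho h0 (Suc k))\<^sup>2"
    unfolding eventually_prod_filter
    by (intro exI[of _ "\<lambda>_. True"] exI[of _ "\<lambda>h. 1/2 < h \<and> h \<le> h0"]) (auto intro: dominated)
  moreover have "((\<lambda>h. (rho h (Suc k))\<^sup>2) \<longlongrightarrow> 0) (at_right (1/2))" for k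
    using tendsto_power[OF rho_tendsto_half[of "Suc k"], of 2] by simp
  moreover have "summable (\<lambda>k. (rho h0 (Suc k))\<^sup>2)"
    using summable_rho_Suc_squared by (simp add: h0_def)
  ultimately have "((\<lambda>h. \<Sum>k. (rho h (Suc k))\<^sup>2) \<longlongrightarrow> (\<Sum>k. (0::real))) (at_right (1/2))"
    by (intro tannerys_theorem[THEN conjunct2, THEN conjunct2]) auto
  then show ?thesis
    by simp
qed

theorem lemmaA3:
  shows "(\<forall>k::nat. k \<ge> 1 \<longrightarrow>
            (\<forall>h\<in>{1/2<..<3/4}. rho h k > 0) \<and>
            strict_mono_on {1/2<..<3/4::real} (\<lambda>h. rho h k))
         \<and> (\<forall>h\<in>{1/2<..<3/4::real}. summable (\<lambda>k. (rho h (Suc k))\<^sup>2))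
         \<and> ((\<lambda>h. \<Sum>k. (rho h (Suc k))\<^sup>2) \<longlongrightarrow> 0) (at_right (1/2))"
proof (intro conjI allI impI ballI)
  fix k :: nat and h :: real
  assume "k \<ge> 1" "h \<in> {1/2<..<3/4}"
  then show "rho h k > 0"
    using rho_pos_strict_mono(1)[of k h "h + 1"] by auto
next
  fix k :: nat
  assume "k \<ge> 1"
  then show "strict_mono_on {1/2<..<3/4::real} (\<lambda>h. rho h k)"
    by (intro strict_mono_onI) (auto intro: rho_pos_strict_mono(2))
next
  fix h :: real
  assume "h \<in> {1/2<..<3/4}"
  then show "summable (\<lambda>k. (rho h (Suc k))\<^sup>2)"
    using summable_rho_Suc_squared by auto
qed (rule suminf_rho_Suc_squared_tendsto_0)

end
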